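(* Call a permutation $g$ of the set $\omega$ of natural numbers local if for every $i\in\omega$ there exists $j>i$ in $\omega$ such that $g$ carries $\{0,\ldots,j-1\}$ to itself. Then every permutation $f$ of $\omega$ is a product $gh$ of two local permutations $g,h$. *)

theory Defs
  imports Main
begin

definition local_perm :: "(nat \<Rightarrow> nat) \<Rightarrow> bool" where
  "local_perm g \<longleftrightarrow> bij g \<and> (\<forall>i. \<exists>j>i. g ` {..<j} = {..<j})"

end

theory Submission
  imports Defs "HOL-Library.Product_Lexorder"
begin

text \<open>Choose \<open>n\<^sub>0 < n\<^sub>1 < \<dots>\<close> such that \<open>f\<close> and its inverse map every segment
  \<open>{..<n\<^sub>i}\<close> into \<open>{..<n\<^sub>i\<^sub>+\<^sub>1}\<close>. The sets \<open>A\<^sub>i\<close>, equal to \<open>{..<n\<^sub>i}\<close> for even \<open>i\<close> and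
  to \<open>f -` {..<n\<^sub>i}\<close> for odd \<open>i\<close>, then form an increasing chain of finite sets of sizes
  \<open>n\<^sub>i\<close> exhausting \<open>\<nat>\<close>. Ranking each element by the first \<open>A\<^sub>i\<close> containing it, ties
  broken by size, gives a permutation \<open>h\<close> mapping every \<open>A\<^sub>i\<close> onto \<open>{..<n\<^sub>i}\<close>. So \<open>h\<close>
  fixes the segments of even index setwise, and \<open>g = f \<circ> inv h\<close> those of odd index,
  because \<open>inv h\<close> maps \<open>{..<n\<^sub>i}\<close> onto \<open>f -` {..<n\<^sub>i}\<close>.\<close>

lemma card_less_key_strict_mono:
  fixes key :: "'a \<Rightarrow> 'b::linorder"
  assumes "finite {z. key z < key y'}" and "key y < key y'"
  shows "card {z. key z < key y} < card {z. key z < key y'}"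
proof (rule psubset_card_mono)
  show "{z. key z < key y} \<subset> {z. key z < key y'}"
    using assms(2) by auto
qed (fact assms(1))

lemma inj_on_card_less_key:
  fixes key :: "'a \<Rightarrow> 'b::linorder"
  assumes "inj key" and "finite D" and down_closed: "\<And>y z. y \<in> D \<Longrightarrow> key z < key y \<Longrightarrow> z \<in> D"
  shows "inj_on (\<lambda>y. card {z. key z < key y}) D"
proof (rule inj_onI)
  fix y y' assume y: "y \<in> D" "y' \<in> D" and eq: "card {z. key z < key y} = card {z. key z < key y'}"
  have "finite {z. key z < key x}" if "x \<in> D" for x
    using down_closed[OF that] by (auto intro: finite_subset[OF _ \<open>finite D\<close>])
  then have "\<not> key y < key y'" "\<not> key y' < key y"
    using card_less_key_strict_mono[of key] y eq by (metis less_irrefl)+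
  then show "y = y'"
    using \<open>inj key\<close> by (metis inj_eq linorder_neqE)
qed

lemma card_less_key_image:
  fixes key :: "'a \<Rightarrow> 'b::linorder"
  assumes "inj key" and "finite D" and down_closed: "\<And>y z. y \<in> D \<Longrightarrow> key z < key y \<Longrightarrow> z \<in> D"
  shows "(\<lambda>y. card {z. key z < key y}) ` D = {..<card D}"
proof (rule card_subset_eq)
  show "(\<lambda>y. card {z. key z < key y}) ` D \<subseteq> {..<card D}"
  proof clarify
    fix y assume "y \<in> D"
    then have "{z. key z < key y} \<subset> D"
      using down_closed by auto
    then show "card {z. key z < key y} < card D"
      using \<open>finite D\<close> by (rule psubset_card_mono[rotated])
  qed
  show "card ((\<lambda>y. card {z. key z < key y}) ` D) = card {..<card D}"
    using card_image[OF inj_on_card_less_key[OF assms]] by simp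
qed simp

lemma ex_bij_enumerating_chain:
  fixes A :: "nat \<Rightarrow> 'a::linorder set"
  assumes "mono A" and finite: "\<And>i. finite (A i)" and covers: "\<And>y. \<exists>i. y \<in> A i"
    and unbounded: "\<And>m. \<exists>i. m < card (A i)"
  shows "\<exists>r :: 'a \<Rightarrow> nat. bij r \<and> (\<forall>i. r ` A i = {..<card (A i)})"
proof -
  define lev where "lev y = (LEAST i. y \<in> A i)" for y
  have in_A_iff: "y \<in> A i \<longleftrightarrow> lev y \<le> i" for y i
  proof
    assume "y \<in> A i"
    then show "lev y \<le> i"
      unfolding lev_def by (rule Least_le)
  next
    assume "lev y \<le> i"
    moreover have "y \<in> A (lev y)"
      unfolding lev_def using covers by (rule LeastI_ex)
    ultimately show "y \<in> A i"
      using \<open>mono A\<close> by (meson monoD subsetD)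
  qed
  define key where "key y = (lev y, y)" for y
  define r where "r y = card {z. key z < key y}" for y
  have "inj key"
    unfolding key_def by (rule injI) simp
  have down_closed: "z \<in> A i" if "y \<in> A i" "key z < key y" for i y z
    using that by (auto simp: in_A_iff key_def)
  have image: "r ` A i = {..<card (A i)}" for i
    unfolding r_def using \<open>inj key\<close> finite down_closed by (rule card_less_key_image)
  have "inj r"
  proof (rule injI)
    fix y y' assume "r y = r y'"
    have "inj_on r (A (max (lev y) (lev y')))"
      unfolding r_def using \<open>inj key\<close> finite down_closed by (rule inj_on_card_less_key)
    then show "y = y'"
      using \<open>r y = r y'\<close> by (rule inj_onD) (simp_all add: in_A_iff)
  qed
  moreover have "surj r"
  proof -
    have "m \<in> range r" for m
      using unbounded[of m] image by blast
    then show ?thesis by blast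
  qed
  ultimately show ?thesis
    using image bij_def by blast
qed

lemma ex_strict_mono_segments_closed:
  fixes f g :: "nat \<Rightarrow> nat"
  shows "\<exists>n. strict_mono n \<and> (\<forall>i. f ` {..<n i} \<subseteq> {..<n (Suc i)} \<and> g ` {..<n i} \<subseteq> {..<n (Suc i)})"
proof -
  have "\<exists>b. a < b \<and> f ` {..<a} \<subseteq> {..<b} \<and> g ` {..<a} \<subseteq> {..<b}" for a
  proof -
    obtain b where "insert a (f ` {..<a} \<union> g ` {..<a}) \<subseteq> {..<b}"
      using finite_nat_set_iff_bounded[of "insert a (f ` {..<a} \<union> g ` {..<a})"] by auto
    then show ?thesis by auto
  qed
  then obtain step where step: "\<And>a. a < step a \<and> f ` {..<a} \<subseteq> {..<step a} \<and> g ` {..<a} \<subseteq> {..<step a}"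
    by metis
  define n where "n k = (step ^^ k) 0" for k
  have "n (Suc k) = step (n k)" for k
    by (simp add: n_def)
  then show ?thesis
    using step by (metis strict_mono_Suc_iff)
qed

lemma local_permI:
  assumes "bij g" and "\<And>k. k < m k" and "\<And>k. g ` {..<m k} = {..<m k}"
  shows "local_perm g"
  unfolding local_perm_def using assms by blast

lemma ex_bij_fixing_alternate_segments:
  fixes f n :: "nat \<Rightarrow> nat"
  assumes "bij f" and "strict_mono n"
    and closed: "\<And>i. f ` {..<n i} \<subseteq> {..<n (Suc i)} \<and> inv f ` {..<n i} \<subseteq> {..<n (Suc i)}"
  shows "\<exists>h. bij h \<and> (\<forall>k. h ` {..<n (2 * k)} = {..<n (2 * k)})
           \<and> (\<forall>k. h ` f -` {..<n (Suc (2 * k))} = {..<n (Suc (2 * k))})"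
proof -
  have n_ge: "i \<le> n i" for i
    using \<open>strict_mono n\<close> by (rule strict_mono_imp_increasing)
  define A where "A i = (if even i then {..<n i} else f -` {..<n i})" for i
  have card_A: "card (A i) = n i" for i
    using \<open>bij f\<close> by (simp add: A_def card_vimage_inj bij_is_inj bij_is_surj)
  have "mono A"
    unfolding mono_iff_le_Suc
  proof (intro allI subsetI)
    fix i x assume "x \<in> A i"
    have "inv f (f x) = x"
      using \<open>bij f\<close> by (simp add: bij_is_inj)
    then show "x \<in> A (Suc i)"
      using \<open>x \<in> A i\<close> closed[of i] by (auto simp: A_def split: if_splits)
  qed
  moreover have "finite (A i)" for i
    using \<open>bij f\<close> by (simp add: A_def bij_vimage_eq_inv_image)
  moreover have "\<exists>i. y \<in> A i" for y
  proof
    show "y \<in> A (2 * Suc y)"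
      using n_ge[of "2 * Suc y"] by (simp add: A_def)
  qed
  moreover have "\<exists>i. m < card (A i)" for m
  proof
    show "m < card (A (Suc m))"
      using n_ge[of "Suc m"] card_A by simp
  qed
  ultimately have "\<exists>h. bij h \<and> (\<forall>i. h ` A i = {..<card (A i)})"
    by (rule ex_bij_enumerating_chain)
  then obtain h where "bij h" and h_A: "\<And>i. h ` A i = {..<n i}"
    using card_A by auto
  moreover have "h ` {..<n (2 * k)} = {..<n (2 * k)}" for k
    using h_A[of "2 * k"] by (simp add: A_def)
  moreover have "h ` f -` {..<n (Suc (2 * k))} = {..<n (Suc (2 * k))}" for k
    using h_A[of "Suc (2 * k)"] by (simp add: A_def)
  ultimately show ?thesis by blast
qed

lemma image_comp_inv_eq:
  assumes "bij f" and "bij h" and "h ` f -` S = S"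
  shows "(f \<circ> inv h) ` S = S"
proof -
  have "inv h ` S = f -` S"
    using assms(2,3) by (metis bij_is_inj image_inv_f_f)
  then have "(f \<circ> inv h) ` S = f ` f -` S"
    by (simp only: image_comp[symmetric])
  then show ?thesis
    using \<open>bij f\<close> by (simp add: bij_is_surj surj_image_vimage_eq)
qed

theorem lemma5p1:
  fixes f :: "nat \<Rightarrow> nat"
  assumes "bij f"
  shows "\<exists>g h. local_perm g \<and> local_perm h \<and> f = g \<circ> h"
proof -
  obtain n where "strict_mono n"
    and closed: "\<And>i. f ` {..<n i} \<subseteq> {..<n (Suc i)} \<and> inv f ` {..<n i} \<subseteq> {..<n (Suc i)}"
    using ex_strict_mono_segments_closed[of f "inv f"] by blast
  obtain h where "bij h" and h_even: "\<And>k. h ` {..<n (2 * k)} = {..<n (2 * k)}"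
    and h_odd: "\<And>k. h ` f -` {..<n (Suc (2 * k))} = {..<n (Suc (2 * k))}"
    using ex_bij_fixing_alternate_segments[OF \<open>bij f\<close> \<open>strict_mono n\<close> closed] by blast
  have n_gt: "k < n (Suc k)" for k
    using strict_mono_imp_increasing[OF \<open>strict_mono n\<close>, of "Suc k"] by simp
  show ?thesis
  proof (intro exI conjI)
    show "local_perm (f \<circ> inv h)"
    proof (rule local_permI)
      show "bij (f \<circ> inv h)"
        using \<open>bij f\<close> \<open>bij h\<close> by (intro bij_comp bij_imp_bij_inv)
      show "k < n (Suc (2 * k))" for k
        using n_gt[of "2 * k"] by simp
      show "(f \<circ> inv h) ` {..<n (Suc (2 * k))} = {..<n (Suc (2 * k))}" for k
        using \<open>bij f\<close> \<open>bij h\<close> h_odd by (rule image_comp_inv_eq)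
    qed
    show "local_perm h"
    proof (rule local_permI)
      show "k < n (2 * Suc k)" for k
        using n_gt[of "Suc (2 * k)"] by simp
    qed (fact \<open>bij h\<close> h_even)+
    show "f = f \<circ> inv h \<circ> h"
      using \<open>bij h\<close> by (simp add: fun_eq_iff bij_is_inj)
  qed
qed

end
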